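(* Let $w:\mathbb R_+\to\mathbb R$ be bounded, continuous, nondecreasing and nonpositive. Then the equation $(Gw)(\phi)=0$ has exactly one strictly positive solution $\phi=\phi[w]$. Moreover, if $\phi_\ell[w]$ denotes the unique root of $\phi\mapsto(g+\lambda_0(Kw))(\phi)$ and $\phi_r[w]:=\phi[w_0]$ with $w_0\equiv-\|w\|$ (the constant function), then $\phi_\ell[w]\le\phi[w]\le\phi_r[w]$. Finally, $(Gw)(\phi)<0$ for $\phi\in(0,\phi[w])$ and $(Gw)(\phi)>0$ for $\phi\in(\phi[w],\infty)$.
   Context: Fix constants $\lambda,\lambda_0,\lambda_1\in(0,\infty)$, $\mu\in\mathbb R\setminus\{0\}$, $c>0$, $a:=\lambda-\lambda_1+\lambda_0$. Let $(E,\mathcal E)$ be a measurable space with probability measures $\nu_0,\nu_1$, $\nu_1\ll\nu_0$, $f:=d\nu_1/d\nu_0$. Let $g(\phi)=\phi-\lambda/c$, $(Kw)(\phi)=\int_Ew(\frac{\lambda_1}{\lambda_0}f(z)\phi)\nu_0(dz)$, $\sigma(z)=\mu z$, $\mathcal A_0h(\phi)=\frac{\mu^2}{2}\phi^2h''(\phi)+(\lambda+a\phi)h'(\phi)$. Let $\psi,\eta$ be the increasing and decreasing (respectively) positive solutions of $\mathcal A_0h=(\lambda+\lambda_0)h$ on $(0,\infty)$ (unique up to positive multiples), with $0<\psi(0+)<\infty$, $\eta(0+)=\infty$, $\psi(\infty)=\infty$, $\eta(\infty)=0$, $\lim_{y\to\infty}\psi'(y)/S'(y)=\infty$ where $S'(y)=\exp\{-2\int_{y_0}^y\frac{\lambda+au}{\mu^2u^2}du\}$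 for a fixed $y_0>0$. Let $B(z)=\psi'(z)\eta(z)-\psi(z)\eta'(z)$ (a positive multiple of $S'(z)$). Define $(Gw)(r)=\int_0^r\frac{2\psi(z)}{\sigma^2(z)B(z)}(g+\lambda_0(Kw))(z)dz$ for $r\ge0$. *)

theory Defs
  imports "HOL-Probability.Probability"
begin

definition gfun :: "real \<Rightarrow> real \<Rightarrow> real \<Rightarrow> real" where
  "gfun lam c phi = phi - lam / c"

text \<open>f = d nu1 / d nu0 (Radon-Nikodym derivative, real-valued).\<close>
definition fRN :: "'e measure \<Rightarrow> 'e measure \<Rightarrow> 'e \<Rightarrow> real" where
  "fRN nu0 nu1 z = enn2real (RN_deriv nu0 nu1 z)"

definition Kop :: "real \<Rightarrow> real \<Rightarrow> 'e measure \<Rightarrow> 'e measure \<Rightarrow> (real \<Rightarrow> real) \<Rightarrow> real \<Rightarrow> real" where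
  "Kop lam0 lam1 nu0 nu1 w phi = (\<integral>z. w (lam1 / lam0 * fRN nu0 nu1 z * phi) \<partial>nu0)"

definition A0op :: "real \<Rightarrow> real \<Rightarrow> real \<Rightarrow> real \<Rightarrow> (real \<Rightarrow> real) \<Rightarrow> real \<Rightarrow> real" where
  "A0op lam lam0 lam1 mu h y =
     mu\<^sup>2 / 2 * y\<^sup>2 * deriv (deriv h) y + (lam + (lam - lam1 + lam0) * y) * deriv h y"

definition oint :: "(real \<Rightarrow> real) \<Rightarrow> real \<Rightarrow> real \<Rightarrow> real" where
  "oint h a b = (if a \<le> b then integral {a..b} h else - integral {b..a} h)"

definition Sprime :: "real \<Rightarrow> real \<Rightarrow> real \<Rightarrow> real \<Rightarrow> real \<Rightarrow> real \<Rightarrow> real" where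
  "Sprime lam lam0 lam1 mu y0 y =
     exp (- 2 * oint (\<lambda>u. (lam + (lam - lam1 + lam0) * u) / (mu\<^sup>2 * u\<^sup>2)) y0 y)"

definition Bfun :: "(real \<Rightarrow> real) \<Rightarrow> (real \<Rightarrow> real) \<Rightarrow> real \<Rightarrow> real" where
  "Bfun psi eta z = deriv psi z * eta z - psi z * deriv eta z"

text \<open>(G w)(r) = int_0^r 2 psi(z)/(sigma(z)^2 B(z)) (g + lam0 K w)(z) dz, sigma(z) = mu z.\<close>
definition Gop :: "real \<Rightarrow> real \<Rightarrow> real \<Rightarrow> real \<Rightarrow> real \<Rightarrow> 'e measure \<Rightarrow> 'e measure
    \<Rightarrow> (real \<Rightarrow> real) \<Rightarrow> (real \<Rightarrow> real) \<Rightarrow> (real \<Rightarrow> real) \<Rightarrow> real \<Rightarrow> real" where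
  "Gop lam lam0 lam1 mu c nu0 nu1 psi eta w r =
     integral {0..r} (\<lambda>z. 2 * psi z / ((mu * z)\<^sup>2 * Bfun psi eta z)
                          * (gfun lam c z + lam0 * Kop lam0 lam1 nu0 nu1 w z))"

definition supnorm :: "(real \<Rightarrow> real) \<Rightarrow> real" where
  "supnorm w = (SUP x\<in>{0..}. \<bar>w x\<bar>)"

end

theory Submission
  imports Defs
begin

text \<open>
  On \<open>(0, \<infinity>)\<close> the function \<open>G w\<close> has derivative \<open>h \<cdot> q\<close>, where
  \<open>h = 2\<psi> / (\<sigma>\<^sup>2 B) > 0\<close> and \<open>q = g + \<lambda>\<^sub>0 K w\<close>.  Because \<open>g\<close> is strictly increasing and
  \<open>K w\<close> is nondecreasing with \<open>-\<parallel>w\<parallel> \<le> K w \<le> 0\<close>, \<open>q\<close> has a unique root \<open>\<phi>\<^sub>\<ell>\<close>, is negative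
  before it and positive after it.  Hence \<open>G w\<close> (which vanishes at \<open>0\<close>) is negative on
  \<open>(0, \<phi>\<^sub>\<ell>]\<close> and strictly increasing on \<open>[\<phi>\<^sub>\<ell>, \<infinity>)\<close>.  It becomes positive eventually
  because \<open>h\<close> has the antiderivative \<open>V/(\<lambda>+\<lambda>\<^sub>0)\<close> with \<open>V = \<psi>'/B\<close>, and \<open>V \<rightarrow> \<infinity>\<close>: the
  Wronskian \<open>B\<close> solves Abel's equation, so it is a positive multiple of \<open>S'\<close>, and
  \<open>\<psi>'/S' \<rightarrow> \<infinity>\<close> by hypothesis.  This gives the unique positive root \<open>\<phi>[w] > \<phi>\<^sub>\<ell>\<close> and
  the sign pattern.  Finally, \<open>G\<close> is monotone in the payoff, so \<open>G w \<ge> G(-\<parallel>w\<parallel>)\<close> and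
  \<open>\<phi>[w] \<le> \<phi>[-\<parallel>w\<parallel>]\<close>.
\<close>

lemma deriv_nonneg_if_mono_on:
  fixes f :: "real \<Rightarrow> real"
  assumes deriv: "DERIV f x :> l" and mono: "mono_on S f" and "open S" "x \<in> S"
  shows "l \<ge> 0"
proof (rule ccontr)
  assume "\<not> l \<ge> 0"
  then obtain d where d: "d > 0" "\<And>t. 0 < t \<Longrightarrow> t < d \<Longrightarrow> f (x + t) < f x"
    using DERIV_neg_dec_right[OF deriv] by force
  obtain e where e: "e > 0" "ball x e \<subseteq> S"
    using \<open>open S\<close> \<open>x \<in> S\<close> open_contains_ball by blast
  define t where "t = min d e / 2"
  have t: "0 < t" "t < d" "t < e" unfolding t_def using d(1) e(1) by auto
  have "x + t \<in> S" using e(2) t by (auto simp: dist_real_def)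
  then have "f x \<le> f (x + t)" using mono \<open>x \<in> S\<close> t(1) by (auto intro: mono_onD)
  with d(2)[OF t(1,2)] show False by simp
qed

lemma deriv_nonpos_if_antimono_on:
  fixes f :: "real \<Rightarrow> real"
  assumes "DERIV f x :> l" "antimono_on S f" "open S" "x \<in> S"
  shows "l \<le> 0"
proof -
  have "mono_on S (\<lambda>x. - f x)"
    using assms(2) by (auto simp: monotone_on_def)
  with deriv_nonneg_if_mono_on[OF DERIV_minus[OF assms(1)]] assms(3,4) show ?thesis by simp
qed

lemma quotient_const_if_wronskian_zero:
  fixes f g f' g' :: "real \<Rightarrow> real"
  assumes "convex S"
    and "\<And>y. y \<in> S \<Longrightarrow> DERIV f y :> f' y" "\<And>y. y \<in> S \<Longrightarrow> DERIV g y :> g' y"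
    and "\<And>y. y \<in> S \<Longrightarrow> g y \<noteq> 0"
    and "\<And>y. y \<in> S \<Longrightarrow> f' y * g y - f y * g' y = 0"
  shows "\<exists>m. \<forall>y\<in>S. f y / g y = m"
proof (rule has_field_derivative_zero_constant[OF \<open>convex S\<close>])
  fix y assume y: "y \<in> S"
  have "DERIV (\<lambda>y. f y / g y) y :> (f' y * g y - f y * g' y) / (g y * g y)"
    using assms(2-4)[OF y] by (rule DERIV_divide)
  then show "((\<lambda>y. f y / g y) has_field_derivative 0) (at y within S)"
    using assms(5)[OF y] by (simp add: has_field_derivative_at_within)
qed

lemma unique_zero_if_strict_mono:
  fixes f :: "real \<Rightarrow> real"
  assumes "a \<le> b" "continuous_on {a..b} f" "f a \<le> 0" "0 \<le> f b"
    and "strict_mono_on {a..} f"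
  shows "\<exists>!x. a \<le> x \<and> f x = 0"
proof -
  obtain x where x: "a \<le> x" "f x = 0"
    using IVT'[of f a 0 b] assms(1-4) by auto
  have "inj_on f {a..}" by (rule strict_mono_on_imp_inj_on[OF assms(5)])
  then have "y = x" if "a \<le> y" "f y = 0" for y
    using x that by (metis atLeast_iff inj_onD)
  with x show ?thesis by blast
qed

section \<open>The jump operator \<open>K\<close>\<close>

lemma supnorm_bound:
  fixes w :: "real \<Rightarrow> real"
  assumes "bounded (w ` {0..})" "x \<ge> 0"
  shows "\<bar>w x\<bar> \<le> supnorm w"
proof -
  obtain B where B: "\<And>y. y \<in> w ` {0..} \<Longrightarrow> norm y \<le> B"
    using assms(1) bounded_iff by metis
  have "bdd_above ((\<lambda>x. \<bar>w x\<bar>) ` {0..})"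
    by (rule bdd_aboveI[where M=B]) (use B in auto)
  then show ?thesis unfolding supnorm_def using assms(2) by (intro cSUP_upper) auto
qed

lemma fRN_nonneg: "fRN nu0 nu1 z \<ge> 0"
  unfolding fRN_def by simp

lemma fRN_measurable[measurable]: "fRN nu0 nu1 \<in> borel_measurable nu0"
  unfolding fRN_def by measurable

lemma K_arg_nonneg:
  assumes "lam0 > 0" "lam1 > 0" "(\<phi>::real) \<ge> 0"
  shows "lam1 / lam0 * fRN nu0 nu1 z * \<phi> \<ge> 0"
  using assms fRN_nonneg[of nu0 nu1 z] by simp

text \<open>Only the values of \<open>w\<close> on \<open>[0, \<infinity>)\<close> matter; clamping the argument gives a
  function continuous on all of \<open>\<real>\<close>.\<close>

lemma continuous_clamped:
  fixes w :: "real \<Rightarrow> real"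
  assumes "continuous_on {0..} w"
  shows "continuous_on UNIV (\<lambda>x. w (max 0 x))"
  by (rule continuous_on_compose2[OF assms continuous_on_max[OF continuous_on_const continuous_on_id]]) auto

lemma K_integrand_measurable:
  fixes w :: "real \<Rightarrow> real"
  assumes "continuous_on {0..} w" "\<phi> \<ge> 0" "lam0 > 0" "lam1 > 0"
  shows "(\<lambda>z. w (lam1 / lam0 * fRN nu0 nu1 z * \<phi>)) \<in> borel_measurable nu0"
proof -
  have "(\<lambda>x. w (max 0 x)) \<in> borel_measurable borel"
    using continuous_clamped[OF assms(1)] by (rule borel_measurable_continuous_onI)
  then have "(\<lambda>z. w (max 0 (lam1 / lam0 * fRN nu0 nu1 z * \<phi>))) \<in> borel_measurable nu0"
    by measurable
  moreover have "max 0 (lam1 / lam0 * fRN nu0 nu1 z * \<phi>) = lam1 / lam0 * fRN nu0 nu1 z * \<phi>" for z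
    by (rule max_absorb2[OF K_arg_nonneg[OF assms(3,4,2)]])
  ultimately show ?thesis by simp
qed

lemma K_integrable:
  fixes w :: "real \<Rightarrow> real"
  assumes "prob_space nu0" "bounded (w ` {0..})" "continuous_on {0..} w"
    and "\<phi> \<ge> 0" "lam0 > 0" "lam1 > 0"
  shows "integrable nu0 (\<lambda>z. w (lam1 / lam0 * fRN nu0 nu1 z * \<phi>))"
proof -
  interpret prob_space nu0 by fact
  have "AE z in nu0. norm (w (lam1 / lam0 * fRN nu0 nu1 z * \<phi>)) \<le> supnorm w"
    by (intro AE_I2) (simp only: real_norm_def supnorm_bound[OF assms(2) K_arg_nonneg[OF assms(5,6,4)]])
  then show ?thesis
    by (rule integrable_const_bound[OF _ K_integrand_measurable[OF assms(3-6)]])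
qed

lemma K_const:
  assumes "prob_space nu0"
  shows "Kop lam0 lam1 nu0 nu1 (\<lambda>_. d) \<phi> = d"
proof -
  interpret prob_space nu0 by fact
  show ?thesis unfolding Kop_def by (simp add: prob_space)
qed

lemma K_mono_fun:
  fixes v w :: "real \<Rightarrow> real"
  assumes "prob_space nu0" "lam0 > 0" "lam1 > 0" "\<phi> \<ge> 0"
    and "bounded (v ` {0..})" "continuous_on {0..} v"
    and "bounded (w ` {0..})" "continuous_on {0..} w"
    and "\<And>x. x \<ge> 0 \<Longrightarrow> v x \<le> w x"
  shows "Kop lam0 lam1 nu0 nu1 v \<phi> \<le> Kop lam0 lam1 nu0 nu1 w \<phi>"
  unfolding Kop_def
proof (rule integral_mono)
  show "integrable nu0 (\<lambda>z. v (lam1 / lam0 * fRN nu0 nu1 z * \<phi>))"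
    "integrable nu0 (\<lambda>z. w (lam1 / lam0 * fRN nu0 nu1 z * \<phi>))"
    by (intro K_integrable; use assms in auto)+
  show "v (lam1 / lam0 * fRN nu0 nu1 z * \<phi>) \<le> w (lam1 / lam0 * fRN nu0 nu1 z * \<phi>)" for z
    by (rule assms(9)[OF K_arg_nonneg[OF assms(2-4)]])
qed

lemma K_mono_arg:
  fixes w :: "real \<Rightarrow> real"
  assumes "prob_space nu0" "lam0 > 0" "lam1 > 0"
    and "bounded (w ` {0..})" "continuous_on {0..} w" "mono_on {0..} w"
    and "0 \<le> x" "x \<le> y"
  shows "Kop lam0 lam1 nu0 nu1 w x \<le> Kop lam0 lam1 nu0 nu1 w y"
  unfolding Kop_def
proof (rule integral_mono)
  show "integrable nu0 (\<lambda>z. w (lam1 / lam0 * fRN nu0 nu1 z * x))"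
    "integrable nu0 (\<lambda>z. w (lam1 / lam0 * fRN nu0 nu1 z * y))"
    by (intro K_integrable; use assms in auto)+
  fix z
  have "lam1 / lam0 * fRN nu0 nu1 z * x \<le> lam1 / lam0 * fRN nu0 nu1 z * y"
    using assms fRN_nonneg[of nu0 nu1 z] by (intro mult_left_mono) auto
  then show "w (lam1 / lam0 * fRN nu0 nu1 z * x) \<le> w (lam1 / lam0 * fRN nu0 nu1 z * y)"
    using K_arg_nonneg[OF assms(2,3), of x nu0 nu1 z] K_arg_nonneg[OF assms(2,3), of y nu0 nu1 z]
      assms(7,8) by (intro mono_onD[OF assms(6)]) auto
qed

text \<open>\<open>Kw\<close> is continuous on \<open>[0, \<infinity>)\<close>, by dominated convergence with the constant
  bound \<open>\<parallel>w\<parallel>\<close>.\<close>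

lemma K_continuous:
  fixes w :: "real \<Rightarrow> real"
  assumes "prob_space nu0" "lam0 > 0" "lam1 > 0"
    and "bounded (w ` {0..})" "continuous_on {0..} w"
  shows "continuous_on {0..} (Kop lam0 lam1 nu0 nu1 w)"
proof (rule continuous_on_sequentiallyI)
  interpret prob_space nu0 by fact
  fix u :: "nat \<Rightarrow> real" and a
  assume u: "\<forall>n. u n \<in> {0..}" and a: "a \<in> {0..}" and lim: "u \<longlonglongrightarrow> a"
  let ?arg = "\<lambda>z \<phi>. lam1 / lam0 * fRN nu0 nu1 z * \<phi>"
  have pointwise: "(\<lambda>n. w (?arg z (u n))) \<longlonglongrightarrow> w (?arg z a)" for z
  proof -
    have "isCont (\<lambda>x. w (max 0 x)) (?arg z a)"
      using continuous_clamped[OF assms(5)] by (simp add: continuous_on_eq_continuous_at)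
    then have "(\<lambda>n. w (max 0 (?arg z (u n)))) \<longlonglongrightarrow> w (max 0 (?arg z a))"
      by (rule isCont_tendsto_compose) (intro tendsto_mult tendsto_const lim)
    moreover have "max 0 (?arg z \<phi>) = ?arg z \<phi>" if "\<phi> \<ge> 0" for \<phi>
      by (rule max_absorb2[OF K_arg_nonneg[OF assms(2,3) that]])
    ultimately show ?thesis using u a by simp
  qed
  have bound: "norm (w (?arg z (u n))) \<le> supnorm w" for z n
    using supnorm_bound[OF assms(4) K_arg_nonneg[OF assms(2,3)], of "u n"] u by simp
  show "(\<lambda>n. Kop lam0 lam1 nu0 nu1 w (u n)) \<longlonglongrightarrow> Kop lam0 lam1 nu0 nu1 w a"
    unfolding Kop_def
  proof (rule integral_dominated_convergence[where w="\<lambda>_. supnorm w"])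
    show "(\<lambda>z. w (?arg z a)) \<in> borel_measurable nu0"
      "\<And>n. (\<lambda>z. w (?arg z (u n))) \<in> borel_measurable nu0"
      by (intro K_integrand_measurable; use assms u a in auto)+
  qed (use pointwise bound in auto)
qed

section \<open>The fundamental solutions \<open>\<psi>\<close>, \<open>\<eta>\<close> and their Wronskian\<close>

locale fundamental_solutions =
  fixes lam lam0 lam1 mu y0 :: real and psi eta :: "real \<Rightarrow> real"
  assumes lam_pos: "lam > 0" and lam0_pos: "lam0 > 0"
    and mu_nz: "mu \<noteq> 0" and y0_pos: "y0 > 0"
    and psi_diff: "\<And>y. y > 0 \<Longrightarrow> psi differentiable (at y) \<and> deriv psi differentiable (at y)"
    and eta_diff: "\<And>y. y > 0 \<Longrightarrow> eta differentiable (at y) \<and> deriv eta differentiable (at y)"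
    and psi_ode: "\<And>y. y > 0 \<Longrightarrow> A0op lam lam0 lam1 mu psi y = (lam + lam0) * psi y"
    and eta_ode: "\<And>y. y > 0 \<Longrightarrow> A0op lam lam0 lam1 mu eta y = (lam + lam0) * eta y"
    and psi_pos: "\<And>y. y > 0 \<Longrightarrow> psi y > 0"
    and eta_pos: "\<And>y. y > 0 \<Longrightarrow> eta y > 0"
    and psi_incr: "mono_on {0<..} psi"
    and eta_decr: "antimono_on {0<..} eta"
    and psi_inf: "filterlim psi at_top at_top"
    and eta_inf: "(eta \<longlongrightarrow> 0) at_top"
    and psi_S: "filterlim (\<lambda>y. deriv psi y / Sprime lam lam0 lam1 mu y0 y) at_top at_top"
begin

abbreviation "S \<equiv> Sprime lam lam0 lam1 mu y0"
abbreviation "B \<equiv> Bfun psi eta"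

text \<open>The drift coefficient of the ODE in normal form, \<open>h'' = 2(\<lambda>+\<lambda>\<^sub>0)h/(\<mu>y)\<^sup>2 - p h'\<close>.\<close>

definition p :: "real \<Rightarrow> real" where
  "p y = 2 * (lam + (lam - lam1 + lam0) * y) / (mu\<^sup>2 * y\<^sup>2)"

lemma psi_deriv: "y > 0 \<Longrightarrow> DERIV psi y :> deriv psi y"
  and psi_deriv2: "y > 0 \<Longrightarrow> DERIV (deriv psi) y :> deriv (deriv psi) y"
  and eta_deriv: "y > 0 \<Longrightarrow> DERIV eta y :> deriv eta y"
  and eta_deriv2: "y > 0 \<Longrightarrow> DERIV (deriv eta) y :> deriv (deriv eta) y"
  using psi_diff eta_diff DERIV_deriv_iff_real_differentiable by blast+

lemma ode_normal_form:
  assumes "y > 0" "A0op lam lam0 lam1 mu f y = (lam + lam0) * f y"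
  shows "deriv (deriv f) y = 2 * (lam + lam0) * f y / (mu\<^sup>2 * y\<^sup>2) - p y * deriv f y"
proof -
  have nz: "mu\<^sup>2 * y\<^sup>2 \<noteq> 0" using mu_nz assms(1) by simp
  from assms(2) have "deriv (deriv f) y * (mu\<^sup>2 * y\<^sup>2)
      = 2 * (lam + lam0) * f y - 2 * (lam + (lam - lam1 + lam0) * y) * deriv f y"
    unfolding A0op_def by (simp add: algebra_simps)
  then have "deriv (deriv f) y
      = (2 * (lam + lam0) * f y - 2 * (lam + (lam - lam1 + lam0) * y) * deriv f y) / (mu\<^sup>2 * y\<^sup>2)"
    using nz by (simp add: eq_divide_eq)
  then show ?thesis
    unfolding p_def by (simp add: diff_divide_distrib)
qed

lemma B_deriv:
  assumes "y > 0"
  shows "DERIV B y :> - p y * B y"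
proof -
  have "DERIV (\<lambda>y. deriv psi y * eta y - psi y * deriv eta y) y :>
     (deriv (deriv psi) y * eta y + deriv psi y * deriv eta y)
       - (deriv psi y * deriv eta y + psi y * deriv (deriv eta) y)"
    using DERIV_mult[OF psi_deriv2[OF assms] eta_deriv[OF assms]]
      DERIV_mult[OF psi_deriv[OF assms] eta_deriv2[OF assms]]
    by (intro DERIV_diff) (simp_all add: algebra_simps)
  moreover have "(deriv (deriv psi) y * eta y + deriv psi y * deriv eta y)
       - (deriv psi y * deriv eta y + psi y * deriv (deriv eta) y) = - p y * B y"
    unfolding Bfun_def ode_normal_form[OF assms psi_ode[OF assms]]
      ode_normal_form[OF assms eta_ode[OF assms]]
    by (simp add: algebra_simps)
  ultimately show ?thesis unfolding Bfun_def[abs_def] by simp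
qed

text \<open>Since \<open>\<psi>' \<ge> 0 \<ge> \<eta>'\<close>, the Wronskian is nonnegative.\<close>

lemma B_nonneg: "y > 0 \<Longrightarrow> B y \<ge> 0"
proof -
  assume y: "y > 0"
  have "deriv psi y \<ge> 0"
    using deriv_nonneg_if_mono_on[OF psi_deriv[OF y] psi_incr] y by simp
  moreover have "deriv eta y \<le> 0"
    using deriv_nonpos_if_antimono_on[OF eta_deriv[OF y] eta_decr] y by simp
  ultimately have "psi y * deriv eta y \<le> 0" "0 \<le> deriv psi y * eta y"
    using psi_pos[OF y] eta_pos[OF y] by (simp_all add: mult_nonneg_nonpos)
  then show ?thesis unfolding Bfun_def by simp
qed

definition F :: "real \<Rightarrow> real" where
  "F u = - lam / (mu\<^sup>2 * u) + (lam - lam1 + lam0) / mu\<^sup>2 * ln u"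

lemma F_deriv:
  assumes "u > 0"
  shows "DERIV F u :> (lam + (lam - lam1 + lam0) * u) / (mu\<^sup>2 * u\<^sup>2)"
proof -
  have "DERIV F u :> - (- lam * (mu\<^sup>2 * 1) / (mu\<^sup>2 * u)\<^sup>2) + (lam - lam1 + lam0) / mu\<^sup>2 * (1 / u)"
    unfolding F_def[abs_def] using assms mu_nz
    by (intro derivative_eq_intros) (auto simp: power2_eq_square)
  then show ?thesis
    using assms mu_nz by (simp add: field_simps power2_eq_square)
qed

text \<open>Closed form of \<open>S'\<close>; in particular \<open>S' > 0\<close> and \<open>S'\<close> satisfies \<open>S'' = -p S'\<close>,
  the same equation as \<open>B\<close>.\<close>

lemma Sprime_eq:
  assumes "y > 0"
  shows "S y = exp (- 2 * (F y - F y0))"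
proof -
  have ftc: "((\<lambda>u. (lam + (lam - lam1 + lam0) * u) / (mu\<^sup>2 * u\<^sup>2)) has_integral (F b - F a)) {a..b}"
    if "0 < a" "a \<le> b" for a b
    using that F_deriv
    by (intro fundamental_theorem_of_calculus)
       (auto simp: has_real_derivative_iff_has_vector_derivative[symmetric]
             intro: has_field_derivative_at_within)
  show ?thesis
  proof (cases "y0 \<le> y")
    case True
    then show ?thesis unfolding Sprime_def oint_def using integral_unique[OF ftc[OF y0_pos True]]
      by simp
  next
    case False
    then show ?thesis unfolding Sprime_def oint_def using integral_unique[OF ftc[OF assms, of y0]]
      by simp
  qed
qed

lemma S_pos: "y > 0 \<Longrightarrow> S y > 0"
  using Sprime_eq by simp

lemma S_deriv:
  assumes "y > 0"
  shows "DERIV S y :> - p y * S y"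
proof (rule has_field_derivative_transform_within_open)
  have "DERIV (\<lambda>y. exp (- 2 * (F y - F y0))) y :>
      exp (- 2 * (F y - F y0)) * (- 2 * ((lam + (lam - lam1 + lam0) * y) / (mu\<^sup>2 * y\<^sup>2) - 0))"
    by (rule DERIV_chain2[OF DERIV_exp DERIV_cmult[OF DERIV_diff[OF F_deriv[OF assms] DERIV_const]]])
  moreover have "exp (- 2 * (F y - F y0)) * (- 2 * ((lam + (lam - lam1 + lam0) * y) / (mu\<^sup>2 * y\<^sup>2) - 0))
      = - p y * S y"
    unfolding Sprime_eq[OF assms] p_def by (simp add: divide_simps) (simp add: algebra_simps)
  ultimately show "DERIV (\<lambda>y. exp (- 2 * (F y - F y0))) y :> - p y * S y"
    by simp
  show "exp (- 2 * (F x - F y0)) = S x" if "x \<in> {0<..}" for x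
    using that Sprime_eq by simp
qed (use assms in auto)

text \<open>The Wronskian cannot vanish identically: otherwise \<open>\<psi>/\<eta>\<close> would be constant, which is
  incompatible with \<open>\<psi> \<rightarrow> \<infinity>\<close> and \<open>\<eta> \<rightarrow> 0\<close> at infinity.\<close>

lemma B_not_identically_zero: "\<exists>y>0. B y \<noteq> 0"
proof (rule ccontr)
  assume "\<not> (\<exists>y>0. B y \<noteq> 0)"
  then have "\<exists>m. \<forall>y\<in>{0<..}. psi y / eta y = m"
    by (intro quotient_const_if_wronskian_zero[where f'="deriv psi" and g'="deriv eta"]
        psi_deriv eta_deriv) (auto simp: Bfun_def dest: eta_pos)
  then obtain m where quotient: "\<And>y. y > 0 \<Longrightarrow> psi y / eta y = m" by auto
  have m: "psi y = m * eta y" if "y > 0" for y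
    using quotient[OF that] eta_pos[OF that] by (simp add: divide_eq_eq)
  have "((\<lambda>y. m * eta y) \<longlongrightarrow> m * 0) at_top"
    by (intro tendsto_mult tendsto_const eta_inf)
  moreover have "eventually (\<lambda>y. m * eta y = psi y) at_top"
    using eventually_gt_at_top[of 0] by eventually_elim (simp add: m)
  ultimately have "(psi \<longlongrightarrow> 0) at_top"
    by (simp add: Lim_transform_eventually)
  then show False
    using not_tendsto_and_filterlim_at_infinity[OF trivial_limit_at_top_linorder]
      filterlim_at_top_imp_at_infinity[OF psi_inf] by blast
qed

text \<open>Since \<open>B\<close> and \<open>S'\<close> solve the same first-order equation, \<open>B\<close> is a positive multiple
  of \<open>S'\<close>.\<close>

lemma B_multiple_of_S: "\<exists>k>0. \<forall>y>0. B y = k * S y"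
proof -
  have "\<exists>k. \<forall>y\<in>{0<..}. B y / S y = k"
  proof (rule quotient_const_if_wronskian_zero[where f'="\<lambda>y. - p y * B y" and g'="\<lambda>y. - p y * S y"])
    show "S y \<noteq> 0" if "y \<in> {0<..}" for y
      using S_pos[of y] that by simp
    show "DERIV B y :> - p y * B y" "DERIV S y :> - p y * S y" if "y \<in> {0<..}" for y
      using B_deriv S_deriv that by simp_all
  qed (simp_all add: algebra_simps)
  then obtain k where quotient: "\<And>y. y > 0 \<Longrightarrow> B y / S y = k" by auto
  have k: "B y = k * S y" if "y > 0" for y
    using quotient[OF that] S_pos[OF that] by (simp add: divide_eq_eq)
  have "k \<ge> 0"
    using k[OF y0_pos] B_nonneg[OF y0_pos] S_pos[OF y0_pos] by (simp add: zero_le_mult_iff)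
  moreover have "k \<noteq> 0"
    using B_not_identically_zero k by auto
  ultimately have "k > 0" by simp
  with k show ?thesis by blast
qed

lemma B_pos: "y > 0 \<Longrightarrow> B y > 0"
  using B_multiple_of_S S_pos by auto

text \<open>The weight of the integrand of \<open>G\<close>, and the function \<open>V = \<psi>'/B\<close> whose derivative
  is proportional to it; \<open>V\<close> plays the role of an antiderivative of the weight.\<close>

definition h :: "real \<Rightarrow> real" where
  "h y = 2 * psi y / ((mu * y)\<^sup>2 * B y)"

definition V :: "real \<Rightarrow> real" where
  "V y = deriv psi y / B y"

lemma h_pos: "y > 0 \<Longrightarrow> h y > 0"
  unfolding h_def using psi_pos B_pos mu_nz by simp

lemma h_nonneg: "y \<ge> 0 \<Longrightarrow> h y \<ge> 0"
  using h_pos[of y] by (cases "y = 0") (auto simp: h_def)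

lemma h_continuous:
  assumes "y > 0"
  shows "isCont h y"
proof -
  have "isCont psi y" "isCont B y"
    using DERIV_isCont[OF psi_deriv[OF assms]] DERIV_isCont[OF B_deriv[OF assms]] .
  moreover have "(mu * y)\<^sup>2 * B y \<noteq> 0" using B_pos[OF assms] mu_nz assms by simp
  ultimately show ?thesis
    unfolding h_def[abs_def] by (intro continuous_intros) auto
qed

lemma V_deriv:
  assumes y: "y > 0"
  shows "DERIV V y :> (lam + lam0) * h y"
proof -
  have B: "B y \<noteq> 0" using B_pos[OF y] by simp
  have "DERIV V y :> (deriv (deriv psi) y * B y - deriv psi y * (- p y * B y)) / (B y * B y)"
    unfolding V_def[abs_def] using B by (rule DERIV_divide[OF psi_deriv2[OF y] B_deriv[OF y]])
  also have "(deriv (deriv psi) y * B y - deriv psi y * (- p y * B y)) / (B y * B y)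
      = ((deriv (deriv psi) y + p y * deriv psi y) * B y) / (B y * B y)"
    by (simp add: algebra_simps)
  also have "\<dots> = (deriv (deriv psi) y + p y * deriv psi y) / B y"
    using B by simp
  also have "\<dots> = (lam + lam0) * h y"
    unfolding ode_normal_form[OF y psi_ode[OF y]] h_def by (simp add: power_mult_distrib)
  finally show ?thesis .
qed

lemma V_mono:
  assumes "0 < x" "x \<le> y"
  shows "V x \<le> V y"
proof (rule DERIV_nonneg_imp_increasing_open[OF assms(2)])
  fix t assume "x < t" "t < y"
  then show "\<exists>d. DERIV V t :> d \<and> d \<ge> 0"
    using V_deriv[of t] h_pos[of t] lam_pos lam0_pos assms by auto
next
  show "continuous_on {x..y} V"
    using assms by (intro continuous_at_imp_continuous_on ballI DERIV_isCont[OF V_deriv]) auto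
qed

lemma V_nonneg: "y > 0 \<Longrightarrow> V y \<ge> 0"
  unfolding V_def using deriv_nonneg_if_mono_on[OF psi_deriv psi_incr] B_pos
  by (simp add: less_imp_le)

text \<open>Since \<open>B\<close> is a constant multiple of \<open>S'\<close>, the growth hypothesis \<open>\<psi>'/S' \<rightarrow> \<infinity>\<close>
  says exactly that \<open>V \<rightarrow> \<infinity>\<close>.\<close>

lemma V_at_top: "filterlim V at_top at_top"
proof -
  obtain k where k: "k > 0" "\<And>y. y > 0 \<Longrightarrow> B y = k * S y"
    using B_multiple_of_S by blast
  have lim: "filterlim (\<lambda>y. (1 / k) * (deriv psi y / S y)) at_top at_top"
    using k(1) by (intro filterlim_tendsto_pos_mult_at_top[OF tendsto_const _ psi_S]) simp
  have "eventually (\<lambda>y. (1 / k) * (deriv psi y / S y) = V y) at_top"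
    using eventually_gt_at_top[of 0] by eventually_elim (simp add: V_def k(2))
  then have "filterlim (\<lambda>y. (1 / k) * (deriv psi y / S y)) at_top at_top \<longleftrightarrow> filterlim V at_top at_top"
    by (rule filterlim_cong[OF refl refl])
  with lim show ?thesis by simp
qed

text \<open>\<open>V\<close> is nondecreasing and bounded below, so it has a limit at \<open>0\<^sup>+\<close>; extending it by
  this limit gives a continuous antiderivative of \<open>(\<lambda>+\<lambda>\<^sub>0) h\<close> on \<open>[0, \<infinity>)\<close>.  This is
  what makes \<open>h\<close> integrable near \<open>0\<close>.\<close>

definition V0 :: real where
  "V0 = Inf (V ` {0<..})"

definition Vext :: "real \<Rightarrow> real" where
  "Vext y = (if y \<le> 0 then V0 else V y)"

lemma V_bdd_below: "bdd_below (V ` {0<..})"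
  by (rule bdd_belowI[where m=0]) (auto intro: V_nonneg)

lemma V0_le: "y > 0 \<Longrightarrow> V0 \<le> V y"
  unfolding V0_def by (rule cINF_lower[OF V_bdd_below]) simp

lemma V_tendsto_V0: "(V \<longlongrightarrow> V0) (at_right 0)"
proof (rule decreasing_tendsto)
  show "eventually (\<lambda>y. V0 \<le> V y) (at_right 0)"
    unfolding eventually_at_right_field by (intro exI[of _ 1]) (auto intro: V0_le)
  fix x assume "V0 < x"
  then obtain y1 where y1: "y1 > 0" "V y1 < x"
    using cInf_less_iff[OF _ V_bdd_below] unfolding V0_def by auto
  have "V y < x" if "0 < y" "y < y1" for y
    using V_mono[of y y1] that y1 by simp
  with y1(1) show "eventually (\<lambda>y. V y < x) (at_right 0)"
    unfolding eventually_at_right_field by blast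
qed

lemma Vext_deriv: "y > 0 \<Longrightarrow> DERIV Vext y :> (lam + lam0) * h y"
  by (rule has_field_derivative_transform_within_open[OF V_deriv, of y "{0<..}"])
     (auto simp: Vext_def)

lemma Vext_continuous: "continuous_on {0..} Vext"
  unfolding continuous_on_eq_continuous_within
proof
  fix x :: real assume "x \<in> {0..}"
  then consider "x = 0" | "x > 0" by fastforce
  then show "continuous (at x within {0..}) Vext"
  proof cases
    case 1
    have "eventually (\<lambda>y. V y = Vext y) (at_right 0)"
      unfolding eventually_at_right_field by (intro exI[of _ 1]) (auto simp: Vext_def)
    with V_tendsto_V0 have "(Vext \<longlongrightarrow> V0) (at_right 0)"
      by (rule Lim_transform_eventually)
    then have "(Vext \<longlongrightarrow> Vext 0) (at_right 0)"
      by (simp add: Vext_def)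
    then have "(Vext \<longlongrightarrow> Vext 0) (at 0 within {0..})"
      by (simp only: at_within_Ici_at_right)
    then show ?thesis
      using 1 by (simp only: continuous_within)
  next
    case 2
    show ?thesis
      by (rule continuous_at_imp_continuous_at_within[OF DERIV_isCont[OF Vext_deriv[OF 2]]])
  qed
qed

lemma Vext_at_top: "filterlim Vext at_top at_top"
proof -
  have "eventually (\<lambda>y. V y = Vext y) at_top"
    using eventually_gt_at_top[of 0] by eventually_elim (simp add: Vext_def)
  then have "filterlim V at_top at_top \<longleftrightarrow> filterlim Vext at_top at_top"
    by (rule filterlim_cong[OF refl refl])
  with V_at_top show ?thesis by simp
qed

lemma h_has_integral:
  assumes "0 \<le> s" "s \<le> r"
  shows "(h has_integral (Vext r - Vext s) / (lam + lam0)) {s..r}"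
proof -
  have "((\<lambda>x. (lam + lam0) * h x) has_integral (Vext r - Vext s)) {s..r}"
  proof (rule fundamental_theorem_of_calculus_interior[OF assms(2)])
    show "continuous_on {s..r} Vext"
      by (rule continuous_on_subset[OF Vext_continuous]) (use assms in auto)
    fix x assume "x \<in> {s<..<r}"
    then show "(Vext has_vector_derivative (lam + lam0) * h x) (at x)"
      using assms Vext_deriv[of x] by (simp add: has_real_derivative_iff_has_vector_derivative)
  qed
  then have "((\<lambda>x. 1 / (lam + lam0) * ((lam + lam0) * h x))
      has_integral 1 / (lam + lam0) * (Vext r - Vext s)) {s..r}"
    by (rule has_integral_mult_right)
  moreover have "(\<lambda>x. 1 / (lam + lam0) * ((lam + lam0) * h x)) = h"
    using lam_pos lam0_pos by (intro ext) simp
  moreover have "1 / (lam + lam0) * (Vext r - Vext s) = (Vext r - Vext s) / (lam + lam0)"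
    by simp
  ultimately show ?thesis by (simp only:)
qed

end

section \<open>The function \<open>G w\<close> and its unique positive root\<close>

locale stopping_problem = fundamental_solutions lam lam0 lam1 mu y0 psi eta
  for lam lam0 lam1 mu y0 :: real and psi eta :: "real \<Rightarrow> real" +
  fixes c :: real and nu0 nu1 :: "'e measure" and w :: "real \<Rightarrow> real"
  assumes lam1_pos: "lam1 > 0" and c_pos: "c > 0"
    and nu0: "prob_space nu0"
    and w_bdd: "bounded (w ` {0..})"
    and w_cont: "continuous_on {0..} w"
    and w_mono: "mono_on {0..} w"
    and w_nonpos: "\<And>x. x \<ge> 0 \<Longrightarrow> w x \<le> 0"
begin

definition q :: "real \<Rightarrow> real" where
  "q z = gfun lam c z + lam0 * Kop lam0 lam1 nu0 nu1 w z"

definition G :: "real \<Rightarrow> real" where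
  "G r = Gop lam lam0 lam1 mu c nu0 nu1 psi eta w r"

lemma G_eq: "G r = integral {0..r} (\<lambda>z. h z * q z)"
  unfolding G_def Gop_def h_def q_def ..

text \<open>\<open>\<parallel>w\<parallel> \<ge> 0\<close>, so the constant payoff \<open>-\<parallel>w\<parallel>\<close> is admissible as well.\<close>

lemma supnorm_nonneg: "supnorm w \<ge> 0"
  using supnorm_bound[OF w_bdd, of 0] by simp

lemma q_continuous: "continuous_on {0..} q"
  unfolding q_def[abs_def] gfun_def
  by (intro continuous_intros K_continuous[OF nu0 lam0_pos lam1_pos w_bdd w_cont])

text \<open>\<open>g\<close> is strictly increasing and \<open>K w\<close> nondecreasing, so \<open>q\<close> is strictly increasing.\<close>

lemma q_strict_mono: "strict_mono_on {0..} q"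
proof (rule strict_mono_onI)
  fix x y :: real assume "x \<in> {0..}" "y \<in> {0..}" "x < y"
  then have "Kop lam0 lam1 nu0 nu1 w x \<le> Kop lam0 lam1 nu0 nu1 w y"
    by (intro K_mono_arg[OF nu0 lam0_pos lam1_pos w_bdd w_cont w_mono]) auto
  then have "lam0 * Kop lam0 lam1 nu0 nu1 w x \<le> lam0 * Kop lam0 lam1 nu0 nu1 w y"
    using lam0_pos by (simp add: mult_left_mono)
  with \<open>x < y\<close> show "q x < q y"
    unfolding q_def gfun_def by simp
qed

text \<open>Since \<open>-\<parallel>w\<parallel> \<le> K w \<le> 0\<close>, the function \<open>q\<close> lies between two lines of slope one.\<close>

lemma q_upper: "z \<ge> 0 \<Longrightarrow> q z \<le> z - lam / c"
proof -
  assume z: "z \<ge> 0"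
  have "Kop lam0 lam1 nu0 nu1 w z \<le> Kop lam0 lam1 nu0 nu1 (\<lambda>_. 0) z"
    by (rule K_mono_fun[OF nu0 lam0_pos lam1_pos z w_bdd w_cont _ continuous_on_const w_nonpos])
      (simp_all add: image_constant_conv)
  then have "lam0 * Kop lam0 lam1 nu0 nu1 w z \<le> 0"
    using lam0_pos K_const[OF nu0] by (simp add: mult_nonneg_nonpos)
  then show ?thesis
    unfolding q_def gfun_def by simp
qed

lemma q_lower: "z \<ge> 0 \<Longrightarrow> z - lam / c - lam0 * supnorm w \<le> q z"
proof -
  assume z: "z \<ge> 0"
  have "Kop lam0 lam1 nu0 nu1 (\<lambda>_. - supnorm w) z \<le> Kop lam0 lam1 nu0 nu1 w z"
    by (rule K_mono_fun[OF nu0 lam0_pos lam1_pos z _ continuous_on_const w_bdd w_cont])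
      (use supnorm_bound[OF w_bdd] abs_le_D2 in \<open>force simp: image_constant_conv\<close>)+
  then have "- supnorm w \<le> Kop lam0 lam1 nu0 nu1 w z"
    by (simp only: K_const[OF nu0])
  then have "lam0 * (- supnorm w) \<le> lam0 * Kop lam0 lam1 nu0 nu1 w z"
    using lam0_pos by (intro mult_left_mono) auto
  then show ?thesis
    unfolding q_def gfun_def by simp
qed

lemma q_0_neg: "q 0 < 0"
proof -
  have "lam / c > 0" using lam_pos c_pos by simp
  then show ?thesis using q_upper[of 0] by simp
qed

text \<open>Hence \<open>q\<close> has exactly one root \<open>\<phi>\<^sub>\<ell>\<close> in \<open>[0, \<infinity>)\<close>; it lies in \<open>(0, \<lambda>/c + \<lambda>\<^sub>0\<parallel>w\<parallel>]\<close>.\<close>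

lemma q_unique_root: "\<exists>!\<phi>. \<phi> \<ge> 0 \<and> q \<phi> = 0"
proof (rule unique_zero_if_strict_mono[OF _ _ less_imp_le[OF q_0_neg] _ q_strict_mono])
  let ?R = "lam / c + lam0 * supnorm w + 1"
  show "0 \<le> ?R" using lam_pos c_pos lam0_pos supnorm_nonneg by simp
  then show "0 \<le> q ?R" using q_lower[of ?R] by simp
  show "continuous_on {0..?R} q" by (rule continuous_on_subset[OF q_continuous]) auto
qed

definition phil :: real where
  "phil = (THE \<phi>. \<phi> \<ge> 0 \<and> q \<phi> = 0)"

lemma phil: "phil > 0" "q phil = 0"
proof -
  have "phil \<ge> 0" "q phil = 0"
    using theI'[OF q_unique_root] unfolding phil_def by auto
  moreover have "phil \<noteq> 0" using \<open>q phil = 0\<close> q_0_neg by auto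
  ultimately show "phil > 0" "q phil = 0" by auto
qed

lemma q_neg: "0 \<le> x \<Longrightarrow> x < phil \<Longrightarrow> q x < 0"
  using strict_mono_onD[OF q_strict_mono, of x phil] phil by simp

lemma q_pos: "phil < x \<Longrightarrow> q x > 0"
  using strict_mono_onD[OF q_strict_mono, of phil x] phil by simp

text \<open>The integrand \<open>h q\<close> is absolutely integrable on every \<open>[0, r]\<close>: \<open>h \<ge> 0\<close> is integrable
  and \<open>q\<close> is bounded and continuous there.\<close>

lemma integrand_integrable: "r \<ge> 0 \<Longrightarrow> (\<lambda>z. h z * q z) integrable_on {0..r}"
proof -
  assume r: "r \<ge> 0"
  have q: "continuous_on {0..r} q" by (rule continuous_on_subset[OF q_continuous]) auto
  have "(\<lambda>z. q z * h z) absolutely_integrable_on {0..r}"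
  proof (rule absolutely_integrable_bounded_measurable_product_real)
    show "q \<in> borel_measurable (lebesgue_on {0..r})"
      by (rule continuous_imp_measurable_on_sets_lebesgue[OF q]) simp
    show "bounded (q ` {0..r})"
      by (rule compact_imp_bounded[OF compact_continuous_image[OF q compact_Icc]])
    show "h absolutely_integrable_on {0..r}"
      using h_has_integral[of 0 r] r
      by (intro nonnegative_absolutely_integrable_1) (auto intro: h_nonneg)
  qed simp
  then show ?thesis by (simp add: mult.commute absolutely_integrable_on_def)
qed

lemma G_0: "G 0 = 0"
  unfolding G_eq by simp

lemma G_continuous: "R \<ge> 0 \<Longrightarrow> continuous_on {0..R} G"
  unfolding G_eq[abs_def] by (rule indefinite_integral_continuous_1[OF integrand_integrable])

lemma G_deriv:
  assumes x: "x > 0"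
  shows "DERIV G x :> h x * q x"
proof -
  define s where "s = x / 2"
  have s: "0 < s" "s < x" unfolding s_def using x by auto
  have "continuous_on {s..2 * x} (\<lambda>z. h z * q z)"
  proof (intro continuous_at_imp_continuous_on ballI continuous_mult)
    fix z assume "z \<in> {s..2 * x}"
    then have z: "z > 0" using s by auto
    show "isCont h z" by (rule h_continuous[OF z])
    show "isCont q z" by (rule continuous_on_interior[OF q_continuous]) (use z in simp)
  qed
  then have "((\<lambda>u. integral {s..u} (\<lambda>z. h z * q z)) has_vector_derivative h x * q x)
      (at x within {s..2 * x})"
    by (rule integral_has_vector_derivative) (use s in auto)
  moreover have "at x within {s..2 * x} = at x" by (rule at_within_interior) (use s in simp)
  ultimately have "DERIV (\<lambda>u. integral {s..u} (\<lambda>z. h z * q z)) x :> h x * q x"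
    by (simp add: has_real_derivative_iff_has_vector_derivative)
  then have D: "DERIV (\<lambda>u. G s + integral {s..u} (\<lambda>z. h z * q z)) x :> h x * q x"
    by (rule DERIV_cong[OF DERIV_add[OF DERIV_const]]) simp
  have eq: "G s + integral {s..u} (\<lambda>z. h z * q z) = G u" if "u \<in> {s<..}" for u
  proof -
    have "0 \<le> s" "s \<le> u" "0 \<le> u" using s that by simp_all
    then show ?thesis unfolding G_eq
      by (rule Henstock_Kurzweil_Integration.integral_combine[OF _ _ integrand_integrable])
  qed
  show ?thesis
    by (rule has_field_derivative_transform_within_open[OF D _ _ eq, of "{s<..}"]) (use s in simp_all)
qed

text \<open>\<open>G\<close> decreases on \<open>(0, \<phi>\<^sub>\<ell>]\<close>, where \<open>q < 0\<close>, so it is negative there \<dots>\<close>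

lemma G_neg_below_phil:
  assumes "0 < r" "r \<le> phil"
  shows "G r < 0"
proof -
  have "G r < G 0"
  proof (rule DERIV_neg_imp_decreasing_open[OF assms(1)])
    fix t assume "0 < t" "t < r"
    then show "\<exists>y. DERIV G t :> y \<and> y < 0"
      using G_deriv[of t] h_pos[of t] q_neg[of t] assms by (auto intro!: mult_pos_neg)
  qed (use G_continuous assms in auto)
  then show ?thesis using G_0 by simp
qed

text \<open>\<dots> and it is strictly increasing on \<open>[\<phi>\<^sub>\<ell>, \<infinity>)\<close>, where \<open>q > 0\<close>.\<close>

lemma G_strict_mono: "strict_mono_on {phil..} G"
proof (rule strict_mono_onI)
  fix a b assume a: "a \<in> {phil..}" and "b \<in> {phil..}" and ab: "a < b"
  show "G a < G b"
  proof (rule DERIV_pos_imp_increasing_open[OF ab])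
    fix t assume "a < t" "t < b"
    then have t: "phil < t" "t > 0" using a phil by auto
    show "\<exists>y. DERIV G t :> y \<and> 0 < y"
      using G_deriv[OF t(2)] h_pos[OF t(2)] q_pos[OF t(1)] by auto
  next
    show "continuous_on {a..b} G"
      by (rule continuous_on_subset[OF G_continuous[of b]]) (use a ab phil in auto)
  qed
qed

text \<open>Past a point \<open>t > \<phi>\<^sub>\<ell>\<close> the integrand is at least \<open>q(t) h\<close>, and \<open>h\<close> has the unbounded
  antiderivative \<open>V / (\<lambda>+\<lambda>\<^sub>0)\<close>.\<close>

lemma G_lower_bound:
  assumes "phil < t" "t \<le> r"
  shows "G t + q t * (Vext r - Vext t) / (lam + lam0) \<le> G r"
proof -
  have t: "t > 0" using assms phil by simp
  have hq: "((\<lambda>z. q t * h z) has_integral q t * ((Vext r - Vext t) / (lam + lam0))) {t..r}"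
    using assms t by (intro has_integral_mult_right h_has_integral) auto
  have "q t * ((Vext r - Vext t) / (lam + lam0)) \<le> integral {t..r} (\<lambda>z. h z * q z)"
  proof (rule has_integral_le[OF hq integrable_integral])
    show "(\<lambda>z. h z * q z) integrable_on {t..r}"
      using assms t by (intro integrable_on_subinterval[OF integrand_integrable[of r]]) auto
    fix z assume z: "z \<in> {t..r}"
    then have "q t \<le> q z"
      using strict_mono_onD[OF q_strict_mono, of t z] t by (cases "t = z") auto
    moreover have "0 \<le> h z" using z t by (intro h_nonneg) auto
    ultimately show "q t * h z \<le> h z * q z"
      by (simp add: mult.commute mult_left_mono)
  qed
  moreover have "G t + integral {t..r} (\<lambda>z. h z * q z) = G r"
    unfolding G_eq
    by (rule Henstock_Kurzweil_Integration.integral_combine) (use assms t integrand_integrable[of r] in auto)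
  ultimately show ?thesis by simp
qed

text \<open>Since \<open>V \<rightarrow> \<infinity>\<close>, the lower bound forces \<open>G\<close> to become positive.\<close>

lemma G_eventually_pos: "\<exists>R \<ge> phil. G R > 0"
proof -
  define t where "t = phil + 1"
  have t: "phil < t" and qt: "q t > 0" using q_pos unfolding t_def by auto
  have lp: "lam + lam0 > 0" using lam_pos lam0_pos by simp
  define M where "M = Vext t + (lam + lam0) * (\<bar>G t\<bar> + 1) / q t"
  have "eventually (\<lambda>r. M \<le> Vext r \<and> t \<le> r) at_top"
    using Vext_at_top[unfolded filterlim_at_top] eventually_ge_at_top[of t]
    by (auto intro: eventually_conj)
  then obtain r where r: "M \<le> Vext r" "t \<le> r"
    unfolding eventually_at_top_linorder by auto
  then have "\<bar>G t\<bar> + 1 \<le> q t * (Vext r - Vext t) / (lam + lam0)"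
    using qt lp unfolding M_def by (simp add: field_simps)
  then have "G r > 0"
    using G_lower_bound[OF t r(2)] by linarith
  with r(2) t show ?thesis by (intro exI[of _ r]) auto
qed

text \<open>Existence and uniqueness of the positive root: there is no root in \<open>(0, \<phi>\<^sub>\<ell>]\<close>, and
  exactly one in \<open>[\<phi>\<^sub>\<ell>, \<infinity>)\<close> by strict monotonicity.\<close>

lemma G_unique_root: "\<exists>!\<phi>. \<phi> > 0 \<and> G \<phi> = 0"
proof -
  obtain R where R: "phil \<le> R" "G R > 0" using G_eventually_pos by blast
  have "\<exists>!\<phi>. phil \<le> \<phi> \<and> G \<phi> = 0"
    using R phil G_neg_below_phil[of phil]
    by (intro unique_zero_if_strict_mono[OF R(1) _ _ _ G_strict_mono])
       (auto intro: continuous_on_subset[OF G_continuous[of R]])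
  moreover have "\<phi> > 0 \<and> G \<phi> = 0 \<longleftrightarrow> phil \<le> \<phi> \<and> G \<phi> = 0" for \<phi>
    using G_neg_below_phil[of \<phi>] phil by force
  ultimately show ?thesis by simp
qed

definition phiw :: real where
  "phiw = (THE \<phi>. \<phi> > 0 \<and> G \<phi> = 0)"

lemma phiw: "phiw > 0" "G phiw = 0"
  using theI'[OF G_unique_root] unfolding phiw_def by auto

lemma phil_less_phiw: "phil < phiw"
  using G_neg_below_phil[of phiw] phiw by force

lemma G_neg_below_root: "0 < x \<Longrightarrow> x < phiw \<Longrightarrow> G x < 0"
  using G_neg_below_phil[of x] strict_mono_onD[OF G_strict_mono, of x phiw] phiw by force

lemma G_pos_above_root: "phiw < x \<Longrightarrow> G x > 0"
  using strict_mono_onD[OF G_strict_mono, of phiw x] phiw phil_less_phiw by simp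

lemma phiw_le_if_G_nonneg: "0 < r \<Longrightarrow> G r \<ge> 0 \<Longrightarrow> phiw \<le> r"
  using G_neg_below_root[of r] by force

text \<open>Lowering the payoff lowers \<open>q\<close> pointwise and hence \<open>G\<close>, since the weight \<open>h\<close> is
  nonnegative.\<close>

lemma G_mono_payoff:
  assumes v: "stopping_problem lam lam0 lam1 mu y0 psi eta c nu0 v"
    and le: "\<And>x. x \<ge> 0 \<Longrightarrow> v x \<le> w x" and r: "r \<ge> 0"
  shows "Gop lam lam0 lam1 mu c nu0 nu1 psi eta v r \<le> G r"
proof -
  interpret v: stopping_problem lam lam0 lam1 mu y0 psi eta c nu0 nu1 v
    by (fact v)
  have "integral {0..r} (\<lambda>z. h z * v.q z) \<le> integral {0..r} (\<lambda>z. h z * q z)"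
  proof (rule integral_le[OF v.integrand_integrable[OF r] integrand_integrable[OF r]])
    fix z assume z: "z \<in> {0..r}"
    have "Kop lam0 lam1 nu0 nu1 v z \<le> Kop lam0 lam1 nu0 nu1 w z"
      using z by (intro K_mono_fun[OF nu0 lam0_pos lam1_pos _ v.w_bdd v.w_cont w_bdd w_cont le]) auto
    then have "v.q z \<le> q z"
      using lam0_pos unfolding v.q_def q_def by (simp add: mult_left_mono)
    with z show "h z * v.q z \<le> h z * q z"
      by (intro mult_left_mono h_nonneg) auto
  qed
  then show ?thesis unfolding v.G_eq[symmetric] G_eq[symmetric] v.G_def .
qed

lemma stopping_problem_const: "stopping_problem lam lam0 lam1 mu y0 psi eta c nu0 (\<lambda>_. - supnorm w)"
  unfolding stopping_problem_def stopping_problem_axioms_def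
  using fundamental_solutions_axioms supnorm_nonneg nu0 lam1_pos c_pos
  by (simp add: image_constant_conv monotone_on_def)

lemma phiw_le_const_root:
  "phiw \<le> (THE \<phi>. \<phi> > 0 \<and> Gop lam lam0 lam1 mu c nu0 nu1 psi eta (\<lambda>_. - supnorm w) \<phi> = 0)"
proof -
  interpret const: stopping_problem lam lam0 lam1 mu y0 psi eta c nu0 nu1 "\<lambda>_. - supnorm w"
    by (fact stopping_problem_const)
  have "0 = const.G const.phiw" using const.phiw by simp
  also have "\<dots> \<le> G const.phiw"
    unfolding const.G_def using const.phiw supnorm_bound[OF w_bdd]
    by (intro G_mono_payoff stopping_problem_const) force+
  finally show ?thesis
    using phiw_le_if_G_nonneg const.phiw unfolding const.phiw_def const.G_def by blast
qed

end

theorem lemma4p2: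
  fixes lam lam0 lam1 mu c y0 :: real
    and nu0 nu1 :: "'e measure"
    and psi eta w :: "real \<Rightarrow> real"
  assumes lam_pos: "lam > 0" and lam0_pos: "lam0 > 0" and lam1_pos: "lam1 > 0"
    and mu_nz: "mu \<noteq> 0" and c_pos: "c > 0" and y0_pos: "y0 > 0"
    and nu0: "prob_space nu0" and nu1: "prob_space nu1"
    and sets_eq: "sets nu1 = sets nu0"
    and ac: "absolutely_continuous nu0 nu1"
    and psi_diff: "\<And>y. y > 0 \<Longrightarrow> psi differentiable (at y) \<and> deriv psi differentiable (at y)"
    and eta_diff: "\<And>y. y > 0 \<Longrightarrow> eta differentiable (at y) \<and> deriv eta differentiable (at y)"
    and psi_ode: "\<And>y. y > 0 \<Longrightarrow> A0op lam lam0 lam1 mu psi y = (lam + lam0) * psi y"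
    and eta_ode: "\<And>y. y > 0 \<Longrightarrow> A0op lam lam0 lam1 mu eta y = (lam + lam0) * eta y"
    and psi_pos: "\<And>y. y > 0 \<Longrightarrow> psi y > 0"
    and eta_pos: "\<And>y. y > 0 \<Longrightarrow> eta y > 0"
    and psi_incr: "mono_on {0<..} psi"
    and eta_decr: "antimono_on {0<..} eta"
    and psi_0: "\<exists>L. 0 < L \<and> (psi \<longlongrightarrow> L) (at_right 0)"
    and eta_0: "filterlim eta at_top (at_right 0)"
    and psi_inf: "filterlim psi at_top at_top"
    and eta_inf: "(eta \<longlongrightarrow> 0) at_top"
    and psi_S: "filterlim (\<lambda>y. deriv psi y / Sprime lam lam0 lam1 mu y0 y) at_top at_top"
    and w_bdd: "bounded (w ` {0..})"
    and w_cont: "continuous_on {0..} w"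
    and w_mono: "mono_on {0..} w"
    and w_nonpos: "\<And>x. x \<ge> 0 \<Longrightarrow> w x \<le> 0"
  shows
    "(\<exists>!phi. phi > 0 \<and> Gop lam lam0 lam1 mu c nu0 nu1 psi eta w phi = 0)
     \<and> (\<exists>!phi. phi \<ge> 0 \<and> gfun lam c phi + lam0 * Kop lam0 lam1 nu0 nu1 w phi = 0)
     \<and> (let phiw = (THE phi. phi > 0 \<and> Gop lam lam0 lam1 mu c nu0 nu1 psi eta w phi = 0);
            phil = (THE phi. phi \<ge> 0 \<and> gfun lam c phi + lam0 * Kop lam0 lam1 nu0 nu1 w phi = 0);
            phir = (THE phi. phi > 0 \<and>
                      Gop lam lam0 lam1 mu c nu0 nu1 psi eta (\<lambda>_. - supnorm w) phi = 0)
        in phil \<le> phiw \<and> phiw \<le> phir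
           \<and> (\<forall>phi. 0 < phi \<and> phi < phiw \<longrightarrow> Gop lam lam0 lam1 mu c nu0 nu1 psi eta w phi < 0)
           \<and> (\<forall>phi. phi > phiw \<longrightarrow> Gop lam lam0 lam1 mu c nu0 nu1 psi eta w phi > 0))"
proof -
  interpret stopping_problem lam lam0 lam1 mu y0 psi eta c nu0 nu1 w
    by (intro stopping_problem.intro fundamental_solutions.intro stopping_problem_axioms.intro)
       (fact assms)+
  have roots: "(THE phi. phi > 0 \<and> Gop lam lam0 lam1 mu c nu0 nu1 psi eta w phi = 0) = phiw"
    "(THE phi. phi \<ge> 0 \<and> gfun lam c phi + lam0 * Kop lam0 lam1 nu0 nu1 w phi = 0) = phil"
    unfolding phiw_def G_def phil_def q_def by (rule refl)+
  show ?thesis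
    unfolding Let_def roots
    using G_unique_root q_unique_root phil_less_phiw phiw_le_const_root
      G_neg_below_root G_pos_above_root
    unfolding G_def q_def by (simp add: less_imp_le)
qed

end
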